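(* Let $\beta\in\mathbb{R}$ and let $\mu$ be a finite Radon measure on $\mathbb{R}^d$ with $\mu\in\dot{B}^{\beta-d}_{\infty,\infty}(\mathbb{R}^d)$. Then there exists a constant $C=C(d)$ such that for all $R>0$, $$\frac{1}{R^{d-\beta}}\int_{B(0,R)}|\widehat{\mu}(\xi)|^2\,d\xi\le C\,\|\mu\|_{M_b}\,\|\mu\|_{\dot{B}^{\beta-d}_{\infty,\infty}}.$$
   Context: $p_t(x)=(4\pi t)^{-d/2}e^{-|x|^2/(4t)}$. $\|\mu\|_{\dot{B}^{\beta-d}_{\infty,\infty}}:=\sup_{t>0}t^{\frac{d-\beta}{2}}\|p_t*\mu\|_{L^\infty}$. $\|\mu\|_{M_b}=|\mu|(\mathbb{R}^d)$. $\widehat{\mu}(\xi)=\int e^{-2\pi i x\cdot\xi}\,d\mu(x)$, and $B(0,R)$ is the open Euclidean ball of radius $R$ centered at $0$. *)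

theory Defs
  imports "HOL-Analysis.Analysis"
begin

text \<open>A finite signed Radon measure mu on R^d is represented by its polar decomposition
  mu = h |mu|, where nu = |mu| is a finite Borel measure and h is Borel with |h| = 1.
  Then the total variation norm of mu is  measure nu UNIV.\<close>

definition heat_kernel :: "real \<Rightarrow> 'a::euclidean_space \<Rightarrow> real" where
  "heat_kernel t x = (4 * pi * t) powr (- real DIM('a) / 2) * exp (- (norm x)\<^sup>2 / (4 * t))"

definition heat_conv :: "'a::euclidean_space measure \<Rightarrow> ('a \<Rightarrow> real) \<Rightarrow> real \<Rightarrow> 'a \<Rightarrow> real" where
  "heat_conv \<nu> h t x = (\<integral>y. heat_kernel t (x - y) * h y \<partial>\<nu>)"

definition heat_linf :: "'a::euclidean_space measure \<Rightarrow> ('a \<Rightarrow> real) \<Rightarrow> real \<Rightarrow> real" where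
  "heat_linf \<nu> h t = (SUP x. \<bar>heat_conv \<nu> h t x\<bar>)"

definition besov_set :: "real \<Rightarrow> 'a::euclidean_space measure \<Rightarrow> ('a \<Rightarrow> real) \<Rightarrow> real set" where
  "besov_set \<beta> \<nu> h = (\<lambda>t. t powr ((real DIM('a) - \<beta>) / 2) * heat_linf \<nu> h t) ` {0<..}"

definition in_besov :: "real \<Rightarrow> 'a::euclidean_space measure \<Rightarrow> ('a \<Rightarrow> real) \<Rightarrow> bool" where
  "in_besov \<beta> \<nu> h \<longleftrightarrow> (\<forall>t>0. bdd_above (range (\<lambda>x. \<bar>heat_conv \<nu> h t x\<bar>))) \<and> bdd_above (besov_set \<beta> \<nu> h)"

definition besov_norm :: "real \<Rightarrow> 'a::euclidean_space measure \<Rightarrow> ('a \<Rightarrow> real) \<Rightarrow> real" where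
  "besov_norm \<beta> \<nu> h = Sup (besov_set \<beta> \<nu> h)"

definition fourier_meas :: "'a::euclidean_space measure \<Rightarrow> ('a \<Rightarrow> real) \<Rightarrow> 'a \<Rightarrow> complex" where
  "fourier_meas \<nu> h \<xi> = (\<integral>x. complex_of_real (h x) * cis (- 2 * pi * (x \<bullet> \<xi>)) \<partial>\<nu>)"

end

theory Submission
  imports Defs "HOL-Probability.Probability"
begin

text \<open>
  The heat kernel \<open>p\<^sub>s\<close> is the inverse Fourier transform of \<open>heat_symbol s \<xi> = exp (-4\<pi>\<^sup>2 s |\<xi>|\<^sup>2)\<close>.
  Hence, by Fubini, \<open>\<integral> heat_symbol s \<xi> |\<hat>\<mu>(\<xi>)|\<^sup>2 d\<xi> = \<integral> (p\<^sub>s * \<mu>) d\<mu>\<close>, which is at most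
  \<open>\<parallel>\<mu>\<parallel>\<^sub>M\<^sub>b \<parallel>p\<^sub>s * \<mu>\<parallel>\<^sub>\<infinity> \<le> s^(-(d-\<beta>)/2) \<parallel>\<mu>\<parallel>\<^sub>M\<^sub>b \<parallel>\<mu>\<parallel>\<^sub>B\<close>. For \<open>s = 1/R\<^sup>2\<close> the Gaussian is at least
  \<open>exp (-4\<pi>\<^sup>2)\<close> on \<open>B(0,R)\<close>, which gives the claim with \<open>C = exp (4\<pi>\<^sup>2)\<close>.
\<close>

definition heat_symbol :: "real \<Rightarrow> 'a::euclidean_space \<Rightarrow> real" where
  "heat_symbol s \<xi> = exp (- (4 * pi\<^sup>2 * s) * (norm \<xi>)\<^sup>2)"

lemma borel_measurable_heat_symbol[measurable]: "heat_symbol s \<in> borel_measurable borel"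
  unfolding heat_symbol_def[abs_def] by measurable

lemma borel_measurable_cis[measurable]:
  "f \<in> borel_measurable M \<Longrightarrow> (\<lambda>x. cis (f x)) \<in> borel_measurable M"
  by (erule measurable_compose, rule borel_measurable_continuous_onI) (intro continuous_intros)

lemma borel_measurable_cnj[measurable]:
  "f \<in> borel_measurable M \<Longrightarrow> (\<lambda>x. cnj (f x)) \<in> borel_measurable M"
  by (erule measurable_compose, rule borel_measurable_continuous_onI) (intro continuous_intros)

lemma cis_sum: "finite I \<Longrightarrow> cis (\<Sum>i\<in>I. f i) = (\<Prod>i\<in>I. cis (f i))"
  by (induction I rule: finite_induct) (auto simp: cis_mult[symmetric])

lemma heat_symbol_prod_Basis:
  "heat_symbol s \<xi> = (\<Prod>b\<in>Basis. heat_symbol s (\<xi> \<bullet> b :: real))"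
proof -
  have "(norm \<xi>)\<^sup>2 = (\<Sum>b\<in>Basis. (\<xi> \<bullet> b)\<^sup>2)"
    by (simp add: norm_eq_sqrt_inner euclidean_inner[of \<xi> \<xi>] power2_eq_square sum_nonneg)
  then show ?thesis
    by (simp add: heat_symbol_def exp_sum[symmetric] sum_distrib_left)
qed

lemma heat_kernel_prod_Basis:
  fixes z :: "'a::euclidean_space" assumes "s > 0"
  shows "heat_kernel s z = (\<Prod>b\<in>Basis. heat_kernel s (z \<bullet> b :: real))"
proof -
  have "(norm z)\<^sup>2 = (\<Sum>b\<in>Basis. (z \<bullet> b)\<^sup>2)"
    by (simp add: norm_eq_sqrt_inner euclidean_inner[of z z] power2_eq_square sum_nonneg)
  moreover have "((4 * pi * s) powr (- 1 / 2)) ^ DIM('a) = (4 * pi * s) powr (- real DIM('a) / 2)"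
    using assms by (simp add: powr_power)
  ultimately show ?thesis
    by (simp add: heat_kernel_def prod.distrib exp_sum[symmetric] sum_divide_distrib sum_negf)
qed

lemma integrable_exp_minus_sq:
  fixes a :: real assumes "a > 0"
  shows "integrable lborel (\<lambda>x. exp (- a * x\<^sup>2))"
proof -
  define \<sigma> where "\<sigma> = sqrt (1 / (2 * a))"
  have \<sigma>: "\<sigma> > 0" using assms by (simp add: \<sigma>_def)
  have "(\<lambda>x. exp (- a * x\<^sup>2)) = (\<lambda>x. sqrt (2 * pi * \<sigma>\<^sup>2) * normal_density 0 \<sigma> x)"
    using assms by (simp add: normal_density_def \<sigma>_def mult.commute)
  then show ?thesis using integrable_normal_density[OF \<sigma>] by simp
qed

lemma fourier_heat_symbol_real:
  fixes s z :: real assumes s: "s > 0"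
  shows "(\<integral>\<xi>. of_real (heat_symbol s \<xi>) * cis (- 2 * pi * (z * \<xi>)) \<partial>lborel) = of_real (heat_kernel s z)"
proof -
  define c where "c = 2 * pi * sqrt (2 * s)"
  define t where "t = - z / sqrt (2 * s)"
  have c: "c > 0" and c2: "c\<^sup>2 = 8 * pi\<^sup>2 * s"
    using s by (simp_all add: c_def power_mult_distrib)
  have tc: "t * c = - 2 * pi * z"
    using s by (simp add: t_def c_def)
  have integrand: "std_normal_density (c * \<xi>) *\<^sub>R iexp (t * (c * \<xi>))
      = of_real (1 / sqrt (2 * pi)) * (of_real (heat_symbol s \<xi>) * cis (- 2 * pi * (z * \<xi>)))" for \<xi>
  proof -
    have "(c * \<xi>)\<^sup>2 / 2 = 4 * pi\<^sup>2 * s * \<xi>\<^sup>2"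
      by (simp add: power_mult_distrib c2)
    moreover have "t * (c * \<xi>) = - 2 * pi * (z * \<xi>)"
      by (simp add: tc mult.assoc[symmetric])
    ultimately show ?thesis
      by (simp add: std_normal_density_def heat_symbol_def cis_conv_exp scaleR_conv_of_real)
  qed
  \<comment> \<open>Substitute \<open>x = c \<xi>\<close> in the characteristic function of the standard normal distribution.\<close>
  have "of_real (exp (- t\<^sup>2 / 2)) = char std_normal_distribution t"
    by (simp add: char_std_normal_distribution)
  also have "\<dots> = (\<integral>x. std_normal_density x *\<^sub>R iexp (t * x) \<partial>lborel)"
    unfolding char_def by (subst integral_density) auto
  also have "\<dots> = c *\<^sub>R (\<integral>\<xi>. std_normal_density (c * \<xi>) *\<^sub>R iexp (t * (c * \<xi>)) \<partial>lborel)"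
    using lborel_integral_real_affine[of c "\<lambda>x. std_normal_density x *\<^sub>R iexp (t * x)" 0] c by simp
  also have "\<dots> = c *\<^sub>R (\<integral>\<xi>. of_real (1 / sqrt (2 * pi))
      * (of_real (heat_symbol s \<xi>) * cis (- 2 * pi * (z * \<xi>))) \<partial>lborel)"
    by (simp only: integrand)
  also have "\<dots> = of_real (c / sqrt (2 * pi))
      * (\<integral>\<xi>. of_real (heat_symbol s \<xi>) * cis (- 2 * pi * (z * \<xi>)) \<partial>lborel)"
    by (simp add: scaleR_conv_of_real)
  finally have "(\<integral>\<xi>. of_real (heat_symbol s \<xi>) * cis (- 2 * pi * (z * \<xi>)) \<partial>lborel)
      = of_real (sqrt (2 * pi) / c * exp (- t\<^sup>2 / 2))"
    using c by (simp add: field_simps)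
  also have "sqrt (2 * pi) / c = (4 * pi * s) powr (- 1 / 2)"
    using s by (simp add: c_def powr_minus_divide powr_half_sqrt real_sqrt_mult field_simps)
  also have "- t\<^sup>2 / 2 = - z\<^sup>2 / (4 * s)"
    using s by (simp add: t_def power_divide)
  finally show ?thesis
    by (simp add: heat_kernel_def)
qed

lemma
  fixes f :: "'a::euclidean_space \<Rightarrow> real \<Rightarrow> 'b::{real_normed_field,banach,second_countable_topology}"
  assumes f: "\<And>b. b \<in> Basis \<Longrightarrow> integrable lborel (f b)"
  shows integrable_lborel_prod_Basis: "integrable lborel (\<lambda>x::'a. \<Prod>b\<in>Basis. f b (x \<bullet> b))"
    and integral_lborel_prod_Basis:
      "(\<integral>x. (\<Prod>b\<in>Basis. f b (x \<bullet> b)) \<partial>lborel) = (\<Prod>b\<in>Basis. integral\<^sup>L lborel (f b))"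
proof -
  interpret product_sigma_finite "\<lambda>_::'a. lborel :: real measure" by standard
  define T where "T = (\<lambda>x. \<Sum>b\<in>(Basis::'a set). x b *\<^sub>R b)"
  have T: "T \<in> measurable (\<Pi>\<^sub>M b\<in>Basis. lborel) borel"
    unfolding T_def by measurable
  have [measurable]: "f b \<in> borel_measurable borel" if "b \<in> Basis" for b
    using borel_measurable_integrable[OF f[OF that]] by simp
  have g: "(\<lambda>x::'a. \<Prod>b\<in>Basis. f b (x \<bullet> b)) \<in> borel_measurable borel"
    by measurable
  have T_Basis: "(\<Prod>b\<in>Basis. f b (T x \<bullet> b)) = (\<Prod>b\<in>Basis. f b (x b))" for x
    by (intro prod.cong) (simp_all add: T_def inner_sum_left inner_Basis if_distrib cong: if_cong)
  have lborel: "lborel = distr (\<Pi>\<^sub>M b\<in>Basis. lborel) borel T"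
    unfolding T_def by (rule lborel_eq)
  show "integrable lborel (\<lambda>x::'a. \<Prod>b\<in>Basis. f b (x \<bullet> b))"
    unfolding lborel by (subst integrable_distr_eq[OF T g]) (simp add: T_Basis product_integrable_prod f)
  show "(\<integral>x. (\<Prod>b\<in>Basis. f b (x \<bullet> b)) \<partial>lborel) = (\<Prod>b\<in>Basis. integral\<^sup>L lborel (f b))"
    unfolding lborel by (subst integral_distr[OF T g]) (simp add: T_Basis product_integral_prod f)
qed

lemma integrable_heat_symbol:
  assumes "s > 0"
  shows "integrable lborel (heat_symbol s :: 'a::euclidean_space \<Rightarrow> real)"
proof -
  have "heat_symbol s = (\<lambda>x::real. exp (- (4 * pi\<^sup>2 * s) * x\<^sup>2))"
    by (simp add: heat_symbol_def[abs_def])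
  then have "integrable lborel (heat_symbol s :: real \<Rightarrow> real)"
    using integrable_exp_minus_sq[of "4 * pi\<^sup>2 * s"] assms by simp
  then have "integrable lborel (\<lambda>\<xi>::'a. \<Prod>b\<in>Basis. heat_symbol s (\<xi> \<bullet> b))"
    by (rule integrable_lborel_prod_Basis)
  then show ?thesis
    by (simp add: heat_symbol_prod_Basis[symmetric])
qed

lemma fourier_heat_symbol:
  fixes z :: "'a::euclidean_space" assumes s: "s > 0"
  shows "(\<integral>\<xi>. of_real (heat_symbol s \<xi>) * cis (- 2 * pi * (z \<bullet> \<xi>)) \<partial>lborel) = of_real (heat_kernel s z)"
proof -
  define f where "f b \<xi> = of_real (heat_symbol s \<xi>) * cis (- 2 * pi * ((z \<bullet> b) * \<xi>))" for b and \<xi> :: real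
  have f: "integrable lborel (f b)" for b
    unfolding f_def
    by (rule Bochner_Integration.integrable_bound[OF integrable_heat_symbol[OF s]]) (auto simp: norm_mult)
  have factor: "of_real (heat_symbol s \<xi>) * cis (- 2 * pi * (z \<bullet> \<xi>)) = (\<Prod>b\<in>Basis. f b (\<xi> \<bullet> b))" for \<xi> :: 'a
    by (simp add: f_def prod.distrib of_real_prod heat_symbol_prod_Basis[of s \<xi>] euclidean_inner[of z \<xi>]
        sum_distrib_left cis_sum mult.assoc)
  have "(\<integral>\<xi>. of_real (heat_symbol s \<xi>) * cis (- 2 * pi * (z \<bullet> \<xi>)) \<partial>lborel)
      = (\<Prod>b\<in>Basis. integral\<^sup>L lborel (f b))"
    unfolding factor by (rule integral_lborel_prod_Basis[OF f])
  also have "\<dots> = (\<Prod>b\<in>Basis. of_real (heat_kernel s (z \<bullet> b)))"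
    unfolding f_def[abs_def] by (intro prod.cong refl fourier_heat_symbol_real[OF s])
  also have "\<dots> = of_real (heat_kernel s z)"
    by (simp add: heat_kernel_prod_Basis[OF s, of z] of_real_prod)
  finally show ?thesis .
qed

lemma integral_mult_integral_swap:
  fixes G :: "'a \<Rightarrow> real" and k :: "'a \<Rightarrow> 'b \<Rightarrow> complex"
  assumes "sigma_finite_measure M" and "finite_measure \<nu>" and G: "integrable M G"
    and k[measurable]: "(\<lambda>p. k (fst p) (snd p)) \<in> borel_measurable (M \<Otimes>\<^sub>M \<nu>)"
    and k_bound: "\<And>\<xi> x. norm (k \<xi> x) \<le> B"
  shows "(\<integral>\<xi>. of_real (G \<xi>) * (\<integral>x. k \<xi> x \<partial>\<nu>) \<partial>M) = (\<integral>x. (\<integral>\<xi>. of_real (G \<xi>) * k \<xi> x \<partial>M) \<partial>\<nu>)"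
proof -
  interpret \<nu>: finite_measure \<nu> by fact
  interpret pair_sigma_finite M \<nu>
    by (intro pair_sigma_finite.intro assms \<nu>.sigma_finite_measure)
  have [measurable]: "G \<in> borel_measurable M"
    using G by (rule borel_measurable_integrable)
  have k_integrable: "integrable \<nu> (k \<xi>)" if "\<xi> \<in> space M" for \<xi>
    using measurable_Pair2[OF k that] by (intro \<nu>.integrable_const_bound[where B=B]) (auto simp: k_bound)
  have B_nonneg: "0 \<le> B"
    using k_bound norm_ge_zero order_trans by blast
  have "integrable (M \<Otimes>\<^sub>M \<nu>) (\<lambda>p. of_real (G (fst p)) * k (fst p) (snd p))"
  proof (rule Fubini_integrable)
    have "(\<integral>x. norm (of_real (G \<xi>) * k \<xi> x) \<partial>\<nu>) \<le> B * measure \<nu> (space \<nu>) * \<bar>G \<xi>\<bar>"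
      if "\<xi> \<in> space M" for \<xi>
    proof -
      have "(\<integral>x. norm (of_real (G \<xi>) * k \<xi> x) \<partial>\<nu>) \<le> (\<integral>x. \<bar>G \<xi>\<bar> * B \<partial>\<nu>)"
        using k_integrable[OF that] by (intro integral_mono) (auto simp: norm_mult k_bound mult_left_mono)
      then show ?thesis by (simp add: mult_ac)
    qed
    then show "integrable M (\<lambda>\<xi>. \<integral>x. norm (of_real (G (fst (\<xi>, x))) * k (fst (\<xi>, x)) (snd (\<xi>, x))) \<partial>\<nu>)"
      by (intro Bochner_Integration.integrable_bound[OF integrable_mult_right[OF integrable_abs[OF G],
          of "B * measure \<nu> (space \<nu>)"]])
        (auto simp: integral_nonneg_AE abs_mult B_nonneg AE_I2)
    show "AE \<xi> in M. integrable \<nu> (\<lambda>x. of_real (G (fst (\<xi>, x))) * k (fst (\<xi>, x)) (snd (\<xi>, x)))"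
      using k_integrable by simp
  qed measurable
  then show ?thesis
    using Fubini_integral[of "\<lambda>\<xi> x. of_real (G \<xi>) * k \<xi> x"] by (simp add: case_prod_beta')
qed

lemma heat_linf_le_besov_norm:
  fixes \<nu> :: "'a::euclidean_space measure"
  assumes "in_besov \<beta> \<nu> h" and t: "t > 0"
  shows "heat_linf \<nu> h t \<le> t powr (- ((real DIM('a) - \<beta>) / 2)) * besov_norm \<beta> \<nu> h"
proof -
  have "heat_linf \<nu> h t = t powr (- ((real DIM('a) - \<beta>) / 2)) * (t powr ((real DIM('a) - \<beta>) / 2) * heat_linf \<nu> h t)"
    using t by (simp add: powr_minus)
  also have "\<dots> \<le> t powr (- ((real DIM('a) - \<beta>) / 2)) * besov_norm \<beta> \<nu> h"
    using assms unfolding in_besov_def besov_norm_def besov_set_def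
    by (intro mult_left_mono cSup_upper) auto
  finally show ?thesis .
qed

lemma inverse_square_powr_minus_half:
  fixes R p :: real assumes "R > 0"
  shows "(1 / R\<^sup>2) powr (- (p / 2)) = R powr p"
proof -
  have "1 / R\<^sup>2 = R powr (- 2)"
    using assms by (simp add: powr_minus_divide powr_realpow)
  then have "(1 / R\<^sup>2) powr (- (p / 2)) = R powr (- 2 * - (p / 2))"
    by (simp only: powr_powr)
  then show ?thesis
    by simp
qed

lemma set_integral_ball_le_heat_symbol:
  fixes f :: "'a::euclidean_space \<Rightarrow> real"
  assumes R: "R > 0" and f_nonneg: "\<And>\<xi>. f \<xi> \<ge> 0"
    and integrable: "integrable lborel (\<lambda>\<xi>. heat_symbol (1 / R\<^sup>2) \<xi> * f \<xi>)"
  shows "(LINT \<xi>:ball 0 R|lborel. f \<xi>) \<le> exp (4 * pi\<^sup>2) * (\<integral>\<xi>. heat_symbol (1 / R\<^sup>2) \<xi> * f \<xi> \<partial>lborel)"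
proof -
  have "indicator (ball 0 R) \<xi> * f \<xi> \<le> exp (4 * pi\<^sup>2) * (heat_symbol (1 / R\<^sup>2) \<xi> * f \<xi>)" for \<xi> :: 'a
  proof (cases "\<xi> \<in> ball 0 R")
    case True
    then have "(norm \<xi>)\<^sup>2 / R\<^sup>2 \<le> 1"
      using R by (simp add: power_mono)
    then have "4 * pi\<^sup>2 * ((norm \<xi>)\<^sup>2 / R\<^sup>2) \<le> 4 * pi\<^sup>2"
      by (rule mult_left_le) simp
    then have "1 \<le> exp (4 * pi\<^sup>2) * heat_symbol (1 / R\<^sup>2) \<xi>"
      by (simp add: heat_symbol_def exp_add[symmetric])
    then show ?thesis
      using True f_nonneg[of \<xi>] by (simp add: mult_le_cancel_right1 mult.assoc[symmetric])
  next
    case False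
    then show ?thesis
      using f_nonneg[of \<xi>] by (simp add: heat_symbol_def)
  qed
  then have "(LINT \<xi>:ball 0 R|lborel. f \<xi>) \<le> (\<integral>\<xi>. exp (4 * pi\<^sup>2) * (heat_symbol (1 / R\<^sup>2) \<xi> * f \<xi>) \<partial>lborel)"
    unfolding set_lebesgue_integral_def
    using f_nonneg by (intro integral_mono_AE' integrable_mult_right integrable) (simp_all add: heat_symbol_def)
  then show ?thesis
    by simp
qed

locale polar_measure = finite_measure \<nu> for \<nu> :: "'a::euclidean_space measure" +
  fixes h :: "'a \<Rightarrow> real"
  assumes sets_eq_borel[measurable_cong]: "sets \<nu> = sets borel"
    and borel_measurable_density[measurable]: "h \<in> borel_measurable borel"
    and abs_density: "\<And>x. \<bar>h x\<bar> = 1"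
begin

lemma space_eq_UNIV[simp]: "space \<nu> = UNIV"
  using sets_eq_imp_space_eq[OF sets_eq_borel] by simp

lemma borel_measurable_fourier_meas[measurable]: "fourier_meas \<nu> h \<in> borel_measurable borel"
  unfolding fourier_meas_def[abs_def] by measurable

lemma norm_fourier_meas_le: "norm (fourier_meas \<nu> h \<xi>) \<le> measure \<nu> UNIV"
proof -
  have "norm (fourier_meas \<nu> h \<xi>) \<le> (\<integral>x. norm (of_real (h x) * cis (- 2 * pi * (x \<bullet> \<xi>))) \<partial>\<nu>)"
    unfolding fourier_meas_def by (rule integral_norm_bound)
  then show ?thesis
    by (simp add: norm_mult abs_density)
qed

lemma heat_conv_eq_fourier_integral:
  assumes s: "s > 0"
  shows "(\<integral>\<xi>. of_real (heat_symbol s \<xi>) * (cis (- 2 * pi * (x \<bullet> \<xi>)) * cnj (fourier_meas \<nu> h \<xi>)) \<partial>lborel)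
    = of_real (heat_conv \<nu> h s x)"
proof -
  define k where "k \<xi> y = of_real (h y) * cis (- 2 * pi * ((x - y) \<bullet> \<xi>))" for \<xi> y
  have k_integral: "cis (- 2 * pi * (x \<bullet> \<xi>)) * cnj (fourier_meas \<nu> h \<xi>) = (\<integral>y. k \<xi> y \<partial>\<nu>)" for \<xi>
  proof -
    have "cis (- 2 * pi * (x \<bullet> \<xi>)) * cnj (fourier_meas \<nu> h \<xi>)
        = (\<integral>y. cis (- 2 * pi * (x \<bullet> \<xi>)) * cnj (of_real (h y) * cis (- 2 * pi * (y \<bullet> \<xi>))) \<partial>\<nu>)"
      by (simp add: fourier_meas_def del: complex_cnj_mult)
    also have "\<dots> = (\<integral>y. k \<xi> y \<partial>\<nu>)"
      by (intro Bochner_Integration.integral_cong)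
        (simp_all add: k_def cis_cnj mult.left_commute cis_mult inner_diff_left algebra_simps)
    finally show ?thesis .
  qed
  have "(\<integral>\<xi>. of_real (heat_symbol s \<xi>) * (cis (- 2 * pi * (x \<bullet> \<xi>)) * cnj (fourier_meas \<nu> h \<xi>)) \<partial>lborel)
      = (\<integral>\<xi>. of_real (heat_symbol s \<xi>) * (\<integral>y. k \<xi> y \<partial>\<nu>) \<partial>lborel)"
    by (simp only: k_integral)
  also have "\<dots> = (\<integral>y. (\<integral>\<xi>. of_real (heat_symbol s \<xi>) * k \<xi> y \<partial>lborel) \<partial>\<nu>)"
    by (rule integral_mult_integral_swap[where B=1])
      (simp_all add: k_def norm_mult abs_density integrable_heat_symbol s lborel.sigma_finite_measure_axioms
        finite_measure_axioms)
  also have "\<dots> = (\<integral>y. of_real (heat_kernel s (x - y) * h y) \<partial>\<nu>)"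
  proof (intro Bochner_Integration.integral_cong refl)
    fix y
    have "(\<integral>\<xi>. of_real (heat_symbol s \<xi>) * k \<xi> y \<partial>lborel)
        = (\<integral>\<xi>. of_real (h y) * (of_real (heat_symbol s \<xi>) * cis (- 2 * pi * ((x - y) \<bullet> \<xi>))) \<partial>lborel)"
      by (simp only: k_def mult.left_commute)
    also have "\<dots> = of_real (h y) * of_real (heat_kernel s (x - y))"
      by (simp only: integral_mult_right_zero fourier_heat_symbol[OF s])
    finally show "(\<integral>\<xi>. of_real (heat_symbol s \<xi>) * k \<xi> y \<partial>lborel) = of_real (heat_kernel s (x - y) * h y)"
      by (simp add: mult.commute)
  qed
  also have "\<dots> = of_real (heat_conv \<nu> h s x)"
    by (simp only: heat_conv_def integral_complex_of_real)
  finally show ?thesis .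
qed

lemma integral_heat_symbol_fourier_sq:
  assumes s: "s > 0"
  shows "(\<integral>\<xi>. heat_symbol s \<xi> * (norm (fourier_meas \<nu> h \<xi>))\<^sup>2 \<partial>lborel) = (\<integral>x. h x * heat_conv \<nu> h s x \<partial>\<nu>)"
proof -
  define k where "k \<xi> x = of_real (h x) * cis (- 2 * pi * (x \<bullet> \<xi>)) * cnj (fourier_meas \<nu> h \<xi>)" for \<xi> x
  have k_bound: "norm (k \<xi> x) \<le> measure \<nu> UNIV" for \<xi> x
    using norm_fourier_meas_le[of \<xi>] by (simp add: k_def norm_mult abs_density)
  have "of_real (\<integral>\<xi>. heat_symbol s \<xi> * (norm (fourier_meas \<nu> h \<xi>))\<^sup>2 \<partial>lborel)
      = (\<integral>\<xi>. of_real (heat_symbol s \<xi>) * (fourier_meas \<nu> h \<xi> * cnj (fourier_meas \<nu> h \<xi>)) \<partial>lborel)"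
    by (simp only: integral_complex_of_real[symmetric] of_real_mult complex_norm_square)
  also have "\<dots> = (\<integral>\<xi>. of_real (heat_symbol s \<xi>) * (\<integral>x. k \<xi> x \<partial>\<nu>) \<partial>lborel)"
    unfolding k_def fourier_meas_def by (simp only: integral_mult_left_zero)
  also have "\<dots> = (\<integral>x. (\<integral>\<xi>. of_real (heat_symbol s \<xi>) * k \<xi> x \<partial>lborel) \<partial>\<nu>)"
    by (rule integral_mult_integral_swap[OF lborel.sigma_finite_measure_axioms finite_measure_axioms
          integrable_heat_symbol[OF s] _ k_bound])
      (unfold k_def, measurable)
  also have "\<dots> = (\<integral>x. of_real (h x * heat_conv \<nu> h s x) \<partial>\<nu>)"
  proof (intro Bochner_Integration.integral_cong refl)
    fix x
    have "(\<integral>\<xi>. of_real (heat_symbol s \<xi>) * k \<xi> x \<partial>lborel)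
        = (\<integral>\<xi>. of_real (h x) * (of_real (heat_symbol s \<xi>)
            * (cis (- 2 * pi * (x \<bullet> \<xi>)) * cnj (fourier_meas \<nu> h \<xi>))) \<partial>lborel)"
      by (intro Bochner_Integration.integral_cong refl) (simp add: k_def ac_simps)
    then show "(\<integral>\<xi>. of_real (heat_symbol s \<xi>) * k \<xi> x \<partial>lborel) = of_real (h x * heat_conv \<nu> h s x)"
      by (simp only: integral_mult_right_zero heat_conv_eq_fourier_integral[OF s] of_real_mult)
  qed
  also have "\<dots> = of_real (\<integral>x. h x * heat_conv \<nu> h s x \<partial>\<nu>)"
    by (rule integral_complex_of_real)
  finally show ?thesis
    by (simp only: of_real_eq_iff)
qed

lemma integrable_heat_symbol_fourier_sq:
  assumes "s > 0"
  shows "integrable lborel (\<lambda>\<xi>. heat_symbol s \<xi> * (norm (fourier_meas \<nu> h \<xi>))\<^sup>2)"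
proof (rule Bochner_Integration.integrable_bound)
  show "integrable lborel (\<lambda>\<xi>. (measure \<nu> UNIV)\<^sup>2 * heat_symbol s \<xi>)"
    by (intro integrable_mult_right integrable_heat_symbol assms)
  show "AE \<xi> in lborel. norm (heat_symbol s \<xi> * (norm (fourier_meas \<nu> h \<xi>))\<^sup>2)
      \<le> norm ((measure \<nu> UNIV)\<^sup>2 * heat_symbol s \<xi>)"
    using norm_fourier_meas_le
    by (intro AE_I2) (simp add: heat_symbol_def mult.commute power_mono)
qed measurable

lemma integral_density_heat_conv_le:
  assumes "bdd_above (range (\<lambda>x. \<bar>heat_conv \<nu> h s x\<bar>))"
  shows "(\<integral>x. h x * heat_conv \<nu> h s x \<partial>\<nu>) \<le> measure \<nu> UNIV * heat_linf \<nu> h s"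
proof -
  have sup: "\<bar>heat_conv \<nu> h s x\<bar> \<le> heat_linf \<nu> h s" for x
    unfolding heat_linf_def by (rule cSUP_upper[OF UNIV_I assms])
  have "h x * heat_conv \<nu> h s x \<le> \<bar>heat_conv \<nu> h s x\<bar>" for x
    using abs_density[of x] by (metis abs_ge_self abs_mult mult_1)
  then have "(\<integral>x. h x * heat_conv \<nu> h s x \<partial>\<nu>) \<le> (\<integral>x. heat_linf \<nu> h s \<partial>\<nu>)"
    using sup order_trans[OF abs_ge_zero sup] by (intro integral_mono_AE') (auto intro: order_trans)
  then show ?thesis
    by (simp add: mult.commute)
qed

lemma integral_heat_symbol_fourier_sq_le:
  assumes "in_besov \<beta> \<nu> h" and "s > 0"
  shows "(\<integral>\<xi>. heat_symbol s \<xi> * (norm (fourier_meas \<nu> h \<xi>))\<^sup>2 \<partial>lborel)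
    \<le> measure \<nu> UNIV * (s powr (- ((real DIM('a) - \<beta>) / 2)) * besov_norm \<beta> \<nu> h)"
proof -
  have "(\<integral>\<xi>. heat_symbol s \<xi> * (norm (fourier_meas \<nu> h \<xi>))\<^sup>2 \<partial>lborel) \<le> measure \<nu> UNIV * heat_linf \<nu> h s"
    using assms unfolding integral_heat_symbol_fourier_sq[OF \<open>s > 0\<close>] in_besov_def
    by (intro integral_density_heat_conv_le) simp
  also have "\<dots> \<le> measure \<nu> UNIV * (s powr (- ((real DIM('a) - \<beta>) / 2)) * besov_norm \<beta> \<nu> h)"
    using heat_linf_le_besov_norm[OF assms] by (intro mult_left_mono) simp_all
  finally show ?thesis .
qed

end

theorem lemma3p2:
  "\<exists>C::real. \<forall>(\<beta>::real) (\<nu>::'a::euclidean_space measure) (h::'a \<Rightarrow> real) (R::real).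
     sets \<nu> = sets borel \<longrightarrow> finite_measure \<nu> \<longrightarrow> h \<in> borel_measurable borel \<longrightarrow>
     (\<forall>x. \<bar>h x\<bar> = 1) \<longrightarrow> in_besov \<beta> \<nu> h \<longrightarrow> R > 0 \<longrightarrow>
     (1 / R powr (real DIM('a) - \<beta>)) * (LINT \<xi>:ball 0 R|lborel. (cmod (fourier_meas \<nu> h \<xi>))\<^sup>2)
       \<le> C * measure \<nu> UNIV * besov_norm \<beta> \<nu> h"
proof (intro exI[of _ "exp (4 * pi\<^sup>2)"] allI impI)
  fix \<beta> :: real and \<nu> :: "'a measure" and h :: "'a \<Rightarrow> real" and R :: real
  assume "sets \<nu> = sets borel" "finite_measure \<nu>" "h \<in> borel_measurable borel" "\<forall>x. \<bar>h x\<bar> = 1"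
    and besov: "in_besov \<beta> \<nu> h" and R: "R > 0"
  then interpret polar_measure \<nu> h
    by (intro polar_measure.intro polar_measure_axioms.intro) simp_all
  have "(LINT \<xi>:ball 0 R|lborel. (cmod (fourier_meas \<nu> h \<xi>))\<^sup>2)
      \<le> exp (4 * pi\<^sup>2) * (\<integral>\<xi>. heat_symbol (1 / R\<^sup>2) \<xi> * (cmod (fourier_meas \<nu> h \<xi>))\<^sup>2 \<partial>lborel)"
    using R by (intro set_integral_ball_le_heat_symbol integrable_heat_symbol_fourier_sq) simp_all
  also have "\<dots> \<le> exp (4 * pi\<^sup>2) * (measure \<nu> UNIV * (R powr (real DIM('a) - \<beta>) * besov_norm \<beta> \<nu> h))"
    using integral_heat_symbol_fourier_sq_le[OF besov, of "1 / R\<^sup>2", unfolded inverse_square_powr_minus_half[OF R]] R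
    by (intro mult_left_mono) simp_all
  finally show "(1 / R powr (real DIM('a) - \<beta>)) * (LINT \<xi>:ball 0 R|lborel. (cmod (fourier_meas \<nu> h \<xi>))\<^sup>2)
      \<le> exp (4 * pi\<^sup>2) * measure \<nu> UNIV * besov_norm \<beta> \<nu> h"
    using R by (simp add: pos_divide_le_eq mult_ac)
qed

end
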